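(* Let $\hat A\in\mathbb{R}^{n\times n}$, $\hat B\in\mathbb{R}^{n\times m}$, and $\rho>0$. Let $Q\in\mathbb{R}^{n\times n}$, $R\in\mathbb{R}^{m\times m}$ with $Q\succ0$, $R\succ0$, factored as $\begin{bmatrix}Q&0\\0&R\end{bmatrix}=\begin{bmatrix}C_c^\top\\ (D_c^u)^\top\end{bmatrix}\begin{bmatrix}C_c & D_c^u\end{bmatrix}$ with $C_c\in\mathbb{R}^{n_c\times n}$, $D_c^u\in\mathbb{R}^{n_c\times m}$, $n_c=n+m$. Define $C_z=\begin{bmatrix}\rho I_n\\ 0_{m\times n}\end{bmatrix}$ and $D_z^u=\begin{bmatrix}0_{n\times m}\\ \rho I_m\end{bmatrix}$. Suppose there exist a symmetric $X\in\mathbb{R}^{n\times n}$ with $X\succ0$, a matrix $M\in\mathbb{R}^{m\times n}$, and a scalar $\beta>0$ such that $$\begin{bmatrix} -\beta I_{n+m} & 0 & 0 & C_zX-D_z^uM & 0\\ * & -I_{n_c} & 0 & C_cX-D_c^uM & 0\\ * & * & -X & \hat AX-\hat BM & \beta I_n\\ * & * & * & -X & 0\\ * & * & * & * & -\beta I_n \end{bmatrix}\preceq 0,$$ where $*$ denotes the blocks determined by symmetry. Set $K=MX^{-1}$ and $P=X^{-1}$. Then for every $\Delta A\in\mathbb{R}^{n\times n}$, $\Delta B\in\mathbb{R}^{n\times m}$ with $\|[\Delta A,\ \Delta B]\|\le\rho$, $$\big(\hat A+\Delta A-(\hat B+\Delta B)K\big)^\top P\big(\hat A+\Delta A-(\hat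 B+\Delta B)K\big)-P+Q+K^\top RK\preceq 0,$$ and consequently, for every initial state $x_0\in\mathbb{R}^n$, the trajectory of $x_{t+1}=(\hat A+\Delta A)x_t+(\hat B+\Delta B)u_t$ with $u_t=-Kx_t$ satisfies $$J(x_0)=\lim_{N\to\infty}\sum_{t=0}^{N}\left(x_t^\top Qx_t+u_t^\top Ru_t\right)\le x_0^\top Px_0 .$$ That is, $u_t=-Kx_t$ is a stabilizing guaranteed cost controller for the uncertain system with guaranteed cost $x_0^\top P x_0$.
   Context: $\|\cdot\|$ on matrices denotes the Frobenius norm. The uncertain system $x_{t+1}=(\hat A+\Delta A)x_t+(\hat B+\Delta B)u_t$ arises from an identified model $(\hat A,\hat B)$ of an unknown linear system whose identification error $[\Delta A,\Delta B]$ is only known to satisfy $\|[\Delta A,\Delta B]\|\le\rho$. $I_k$ denotes the $k\times k$ identity and $\preceq 0$ means negative semidefinite. *)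

theory Defs
  imports "HOL-Analysis.Analysis"
begin

definition hcat :: "real^'b^'a \<Rightarrow> real^'c^'a \<Rightarrow> real^('b + 'c)^'a" where
  "hcat A B = (\<chi> i j. case j of Inl k \<Rightarrow> A $ i $ k | Inr k \<Rightarrow> B $ i $ k)"

definition vcat :: "real^'c^'a \<Rightarrow> real^'c^'b \<Rightarrow> real^'c^('a + 'b)" where
  "vcat A B = (\<chi> i. case i of Inl k \<Rightarrow> A $ k | Inr k \<Rightarrow> B $ k)"

definition pos_def :: "real^'n^'n \<Rightarrow> bool" where
  "pos_def S \<longleftrightarrow> transpose S = S \<and> (\<forall>x. x \<noteq> 0 \<longrightarrow> x \<bullet> (S *v x) > 0)"

definition neg_semidef :: "real^'n^'n \<Rightarrow> bool" where
  "neg_semidef S \<longleftrightarrow> transpose S = S \<and> (\<forall>x. x \<bullet> (S *v x) \<le> 0)"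

definition Cz :: "real \<Rightarrow> real^'n::finite^('n + 'm::finite)" where
  "Cz \<rho> = vcat (mat \<rho>) (0 :: real^'n^'m)"

definition Dzu :: "real \<Rightarrow> real^'m::finite^('n::finite + 'm)" where
  "Dzu \<rho> = vcat (0 :: real^'m^'n) (mat \<rho>)"

definition lmi_matrix ::
  "real^'n^'n \<Rightarrow> real^'m^'n \<Rightarrow> real \<Rightarrow> real^'n^('n+'m) \<Rightarrow> real^'m^('n+'m)
   \<Rightarrow> real^'n^'n \<Rightarrow> real^'n^'m \<Rightarrow> real
   \<Rightarrow> real^(('n+'m) + (('n+'m) + ('n + ('n + 'n))))^(('n+'m) + (('n+'m) + ('n + ('n + 'n))))"
  where
  "lmi_matrix Ah Bh \<rho> Cc Dcu X M \<beta> =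
     (let W1 = Cz \<rho> ** X - Dzu \<rho> ** M;
          W2 = Cc ** X - Dcu ** M;
          W3 = Ah ** X - Bh ** M;
          Z = (0 :: real^'n^'n)
      in vcat
        (hcat (mat (-\<beta>)) (hcat 0 (hcat 0 (hcat W1 0))))
      (vcat
        (hcat 0 (hcat (mat (-1)) (hcat 0 (hcat W2 0))))
      (vcat
        (hcat 0 (hcat 0 (hcat (-X) (hcat W3 (mat \<beta>)))))
      (vcat
        (hcat (transpose W1) (hcat (transpose W2) (hcat (transpose W3) (hcat (-X) Z))))
        (hcat 0 (hcat 0 (hcat (mat \<beta>) (hcat Z (mat (-\<beta>))))))))))"

end

theory Submission
  imports Defs
begin

text \<open>
  Fix an admissible perturbation [dA, dB] and a state z, and put y = X^-1 z, k = K z,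
  d = dA z - dB k and w = (Ah + dA - (Bh + dB) K) z. Evaluating the LMI at the vector
  (W1 y / beta, W2 y, X^-1 w, y, d / beta), with W1, W2 the blocks of lmi_matrix, all cross
  terms cancel and what remains is
    (|W1 y|^2 - |d|^2) / beta + |W2 y|^2 + w' P w - z' P z <= 0.
  Now |W1 y| = rho |(z, -k)| >= |[dA, dB] (z, -k)| = |d|, and |W2 y|^2 = z' Q z + k' R k by
  the factorisation of diag(Q, R); so V(z) = z' P z decreases along the closed loop by at least
  the stage cost. Summing along a trajectory bounds the cost by V(x0), and as the stage costs
  are then summable and Q is positive definite, the state tends to zero.
\<close>

definition vjoin :: "real^'a \<Rightarrow> real^'b \<Rightarrow> real^('a + 'b)" where
  "vjoin x y = (\<chi> i. case i of Inl k \<Rightarrow> x $ k | Inr k \<Rightarrow> y $ k)"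

lemma sum_UNIV_Plus:
  "(\<Sum>i\<in>(UNIV :: ('a::finite + 'b::finite) set). f i) = (\<Sum>i\<in>UNIV. f (Inl i)) + (\<Sum>i\<in>UNIV. f (Inr i))"
  by (simp add: UNIV_Plus_UNIV[symmetric] sum.Plus del: UNIV_Plus_UNIV)

lemma hcat_mult_vjoin: "hcat A B *v vjoin x y = A *v x + B *v y"
  by (simp add: vec_eq_iff matrix_vector_mult_def hcat_def vjoin_def sum_UNIV_Plus)

lemma vcat_mult_vector: "vcat A B *v v = vjoin (A *v v) (B *v v)"
  by (simp add: vec_eq_iff matrix_vector_mult_def vcat_def vjoin_def split: sum.split)

lemma inner_vjoin: "vjoin a b \<bullet> vjoin c d = a \<bullet> c + b \<bullet> d"
  by (simp add: inner_vec_def vjoin_def sum_UNIV_Plus)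

lemma vjoin_scaleR: "r *\<^sub>R vjoin a b = vjoin (r *\<^sub>R a) (r *\<^sub>R b)"
  by (simp add: vec_eq_iff vjoin_def split: sum.split)

lemma mat_mult_vector: "mat c *v x = c *\<^sub>R (x :: real^'n)"
  by (simp add: vec_eq_iff matrix_vector_mult_def mat_def if_distrib if_distribR cong: if_cong)

lemma matrix_vector_mult_uminus_left: "(- A) *v x = - (A *v (x :: real^'n))"
  by (simp add: vec_eq_iff matrix_vector_mult_def sum_negf)

lemma transpose_add: "transpose (A + B) = transpose A + transpose (B :: real^'n^'m)"
  by (simp add: transpose_def vec_eq_iff)

lemma transpose_diff: "transpose (A - B) = transpose A - transpose (B :: real^'n^'m)"
  by (simp add: transpose_def vec_eq_iff)

lemma inner_vector_matrix_mult: "a \<bullet> (b v* (A :: real^'n^'m)) = (A *v a) \<bullet> b"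
  by (metis dot_lmul_matrix inner_commute)

lemma inner_transpose_right: "a \<bullet> (transpose A *v b) = ((A :: real^'n^'m) *v a) \<bullet> b"
  by (simp add: inner_vector_matrix_mult)

lemma norm_matrix_vector_mult_le: "norm ((A :: real^'n^'m) *v x) \<le> norm A * norm x"
proof -
  have "norm (A *v x)^2 = (\<Sum>i\<in>UNIV. (A$i \<bullet> x)^2)"
    unfolding power2_norm_eq_inner inner_vec_def[of "A *v x"] matrix_vector_mul_component
    by (simp add: power2_eq_square)
  also have "\<dots> \<le> (\<Sum>i\<in>UNIV. norm (A$i)^2 * norm x^2)"
    by (intro sum_mono) (metis Cauchy_Schwarz_ineq power2_norm_eq_inner)
  also have "\<dots> = (norm A * norm x)^2"
    unfolding power_mult_distrib sum_distrib_right[symmetric] power2_norm_eq_inner inner_vec_def[of A A]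
    by (simp add: power2_eq_square)
  finally show ?thesis
    by (rule power2_le_imp_le) simp
qed

lemma pos_def_nonneg: "pos_def Q \<Longrightarrow> 0 \<le> x \<bullet> ((Q :: real^'n^'n) *v x)"
  unfolding pos_def_def by (cases "x = 0") (auto intro: less_imp_le)

lemma pos_def_invertible: "pos_def (X :: real^'n^'n) \<Longrightarrow> invertible X"
  unfolding pos_def_def invertible_left_inverse matrix_left_invertible_ker
  by (metis inner_zero_right less_irrefl)

lemma invertible_matrix_inv:
  assumes "invertible (X :: real^'n^'n)"
  shows "X ** matrix_inv X = mat 1" and "matrix_inv X ** X = mat 1"
  using someI_ex[OF assms[unfolded invertible_def]] unfolding matrix_inv_def by auto

lemma pos_def_matrix_inv:
  assumes X: "pos_def (X :: real^'n^'n)"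
  shows "pos_def (matrix_inv X)"
proof -
  let ?P = "matrix_inv X"
  have X_sym: "transpose X = X" using X unfolding pos_def_def by simp
  have XP: "X ** ?P = mat 1" and PX: "?P ** X = mat 1"
    using invertible_matrix_inv[OF pos_def_invertible[OF X]] by auto
  have "transpose ?P = transpose ?P ** (X ** ?P)"
    by (simp add: XP)
  also have "\<dots> = ?P"
    by (metis matrix_mul_assoc matrix_mul_lid matrix_transpose_mul X_sym PX transpose_mat)
  finally have "transpose ?P = ?P" .
  moreover have "v \<bullet> (?P *v v) > 0" if "v \<noteq> 0" for v
  proof -
    have X_Pv: "X *v (?P *v v) = v"
      by (simp add: matrix_vector_mul_assoc XP)
    then have "?P *v v \<noteq> 0" using that by auto
    then have "0 < (?P *v v) \<bullet> (X *v (?P *v v))"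
      using X unfolding pos_def_def by blast
    then show ?thesis by (simp add: X_Pv inner_commute)
  qed
  ultimately show ?thesis unfolding pos_def_def by blast
qed

lemma pos_def_coercive:
  assumes "pos_def (Q :: real^'n^'n)"
  obtains l where "l > 0" and "\<And>x. l * norm x ^ 2 \<le> x \<bullet> (Q *v x)"
proof -
  have ne: "sphere (0 :: real^'n) 1 \<noteq> {}"
    using norm_axis_1[of undefined] by (metis mem_sphere_0 empty_iff)
  have cont: "continuous_on (sphere 0 1) (\<lambda>x. x \<bullet> (Q *v x))"
    by (intro continuous_intros)
  obtain e where e: "e \<in> sphere 0 1" and min: "\<forall>y \<in> sphere 0 1. e \<bullet> (Q *v e) \<le> y \<bullet> (Q *v y)"
    using continuous_attains_inf[OF compact_sphere ne cont] by blast
  have "e \<noteq> 0" using e by auto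
  then have pos: "e \<bullet> (Q *v e) > 0" using assms unfolding pos_def_def by blast
  have "e \<bullet> (Q *v e) * norm x ^ 2 \<le> x \<bullet> (Q *v x)" for x
  proof (cases "x = 0")
    case False
    let ?u = "(1 / norm x) *\<^sub>R x"
    have "?u \<in> sphere 0 1" using False by simp
    with min have "e \<bullet> (Q *v e) \<le> ?u \<bullet> (Q *v ?u)" by blast
    then have "e \<bullet> (Q *v e) * norm x ^ 2 \<le> ?u \<bullet> (Q *v ?u) * norm x ^ 2"
      by (rule mult_right_mono) simp
    also have "\<dots> = x \<bullet> (Q *v x)"
      using False by (simp add: matrix_vector_mult_scaleR power2_eq_square)
    finally show ?thesis .
  qed simp
  with pos show thesis by (rule that)
qed

lemma quadratic_form_lyapunov_matrix:
  fixes A P Q :: "real^'n^'n" and K :: "real^'n^'m" and R :: "real^'m^'m"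
  shows "z \<bullet> ((transpose A ** P ** A - P + Q + transpose K ** R ** K) *v z)
    = (A *v z) \<bullet> (P *v (A *v z)) - z \<bullet> (P *v z) + z \<bullet> (Q *v z) + (K *v z) \<bullet> (R *v (K *v z))"
  by (simp add: matrix_vector_mult_add_rdistrib matrix_vector_mult_diff_rdistrib
      matrix_vector_mul_assoc[symmetric] inner_add_right inner_diff_right inner_vector_matrix_mult)

lemma lmi_quadratic_form:
  fixes Ah X :: "real^'n::finite^'n" and Bh :: "real^'m::finite^'n" and Cc :: "real^'n^('n + 'm)"
    and Dcu :: "real^'m^('n + 'm)" and M :: "real^'n^'m" and \<rho> :: real
    and v1 v2 :: "real^('n + 'm)" and v3 v4 v5 :: "real^'n"
  defines "W1 \<equiv> Cz \<rho> ** X - Dzu \<rho> ** M" and "W2 \<equiv> Cc ** X - Dcu ** M"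
    and "W3 \<equiv> Ah ** X - Bh ** M"
  shows "vjoin v1 (vjoin v2 (vjoin v3 (vjoin v4 v5))) \<bullet>
      (lmi_matrix Ah Bh \<rho> Cc Dcu X M \<beta> *v vjoin v1 (vjoin v2 (vjoin v3 (vjoin v4 v5))))
    = 2 * (v1 \<bullet> (W1 *v v4)) - \<beta> * (v1 \<bullet> v1) + 2 * (v2 \<bullet> (W2 *v v4)) - v2 \<bullet> v2
      + 2 * (v3 \<bullet> (W3 *v v4)) - v3 \<bullet> (X *v v3) + 2 * \<beta> * (v3 \<bullet> v5)
      - v4 \<bullet> (X *v v4) - \<beta> * (v5 \<bullet> v5)"
  unfolding lmi_matrix_def Let_def W1_def[symmetric] W2_def[symmetric] W3_def[symmetric]
  by (simp add: vcat_mult_vector hcat_mult_vjoin inner_vjoin mat_mult_vector matrix_vector_mult_uminus_left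
      inner_vector_matrix_mult inner_commute[of v5 v3] inner_commute[of "W1 *v v4" v1]
      inner_commute[of "W2 *v v4" v2] inner_commute[of "W3 *v v4" v3] algebra_simps)

lemma lmi_perturbed_decrease:
  fixes y d :: "real^'n::finite" and M :: "real^'n^'m::finite"
  assumes lmi: "neg_semidef (lmi_matrix Ah Bh \<rho> Cc Dcu X M \<beta>)" and "\<beta> > 0"
    and XP: "X ** P = mat 1"
    and d: "d \<bullet> d \<le> norm ((Cz \<rho> ** X - Dzu \<rho> ** M) *v y) ^ 2"
  defines "w \<equiv> (Ah ** X - Bh ** M) *v y + d"
  shows "w \<bullet> (P *v w) - y \<bullet> (X *v y) + norm ((Cc ** X - Dcu ** M) *v y) ^ 2 \<le> 0"
proof -
  define p where "p = (Cz \<rho> ** X - Dzu \<rho> ** M) *v y"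
  define q where "q = (Cc ** X - Dcu ** M) *v y"
  define v where "v = vjoin ((1 / \<beta>) *\<^sub>R p) (vjoin q (vjoin (P *v w) (vjoin y ((1 / \<beta>) *\<^sub>R d))))"
  have XPw: "X *v (P *v w) = w"
    by (simp add: matrix_vector_mul_assoc XP)
  have W3y: "(Ah ** X - Bh ** M) *v y = w - d"
    by (simp add: w_def)
  have "v \<bullet> (lmi_matrix Ah Bh \<rho> Cc Dcu X M \<beta> *v v)
      = (p \<bullet> p - d \<bullet> d) / \<beta> + q \<bullet> q + w \<bullet> (P *v w) - y \<bullet> (X *v y)"
    unfolding v_def lmi_quadratic_form p_def[symmetric] q_def[symmetric] W3y XPw
    using \<open>\<beta> > 0\<close>
    by (simp add: inner_diff_right inner_commute[of "P *v w"] field_simps power2_eq_square)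
  moreover have "v \<bullet> (lmi_matrix Ah Bh \<rho> Cc Dcu X M \<beta> *v v) \<le> 0"
    using lmi unfolding neg_semidef_def by blast
  moreover have "0 \<le> (p \<bullet> p - d \<bullet> d) / \<beta>"
    using d \<open>\<beta> > 0\<close> by (simp add: p_def power2_norm_eq_inner)
  ultimately show ?thesis
    by (simp add: q_def power2_norm_eq_inner)
qed

lemma norm_factored_cost:
  fixes Cc :: "real^'n^'k" and Dcu :: "real^'m^'k" and z :: "real^'n" and k :: "real^'m"
  assumes "transpose Cc ** Cc = Q" and "transpose Cc ** Dcu = 0" and "transpose Dcu ** Dcu = R"
  shows "norm (Cc *v z - Dcu *v k) ^ 2 = z \<bullet> (Q *v z) + k \<bullet> (R *v k)"
proof -
  have "z \<bullet> (Q *v z) = (Cc *v z) \<bullet> (Cc *v z)" and "k \<bullet> (R *v k) = (Dcu *v k) \<bullet> (Dcu *v k)"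
    by (simp_all add: assms(1,3)[symmetric] matrix_vector_mul_assoc[symmetric] inner_vector_matrix_mult)
  moreover have "(Cc *v z) \<bullet> (Dcu *v k) = 0"
    using inner_transpose_right[of z Cc "Dcu *v k"] assms(2)
    by (simp add: matrix_vector_mul_assoc)
  ultimately show ?thesis
    by (simp add: power2_norm_eq_inner inner_diff_left inner_diff_right inner_commute[of "Dcu *v k" "Cc *v z"])
qed

lemma Cz_Dzu_mult_vector: "(Cz \<rho> ** X - Dzu \<rho> ** M) *v y = \<rho> *\<^sub>R vjoin (X *v y) (- (M *v y))"
  by (simp add: Cz_def Dzu_def matrix_vector_mult_diff_rdistrib matrix_vector_mul_assoc[symmetric]
      vcat_mult_vector mat_mult_vector vjoin_scaleR vec_eq_iff vjoin_def split: sum.split)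

lemma robust_lyapunov_inequality:
  fixes Ah dA :: "real^'n^'n" and Bh dB :: "real^'m^'n" and Q :: "real^'n^'n" and R :: "real^'m^'m"
    and Cc :: "real^'n^('n+'m)" and Dcu :: "real^'m^('n+'m)" and X :: "real^'n^'n" and M :: "real^'n^'m"
  assumes fact_Q: "transpose Cc ** Cc = Q"
    and fact_0: "transpose Cc ** Dcu = 0"
    and fact_R: "transpose Dcu ** Dcu = R"
    and X_pd: "pos_def X" and "\<beta> > 0"
    and lmi: "neg_semidef (lmi_matrix Ah Bh \<rho> Cc Dcu X M \<beta>)"
    and uncertainty: "norm (hcat dA dB) \<le> \<rho>"
  defines "K \<equiv> M ** matrix_inv X" and "P \<equiv> matrix_inv X"
  shows "neg_semidef (transpose (Ah + dA - (Bh + dB) ** K) ** P ** (Ah + dA - (Bh + dB) ** K)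
    - P + Q + transpose K ** R ** K)"
proof -
  have "\<rho> \<ge> 0"
    using norm_ge_zero[of "hcat dA dB"] uncertainty by linarith
  define Acl where "Acl = Ah + dA - (Bh + dB) ** K"
  have XP: "X ** P = mat 1" and P_sym: "transpose P = P"
    using invertible_matrix_inv[OF pos_def_invertible[OF X_pd]] pos_def_matrix_inv[OF X_pd]
    unfolding P_def pos_def_def by auto
  have "transpose Q = Q" and "transpose R = R"
    using fact_Q fact_R by (auto simp: matrix_transpose_mul)
  with P_sym have symmetric: "transpose (transpose Acl ** P ** Acl - P + Q + transpose K ** R ** K)
      = transpose Acl ** P ** Acl - P + Q + transpose K ** R ** K"
    by (simp add: transpose_add transpose_diff matrix_transpose_mul matrix_mul_assoc)
  have decrease: "z \<bullet> ((transpose Acl ** P ** Acl - P + Q + transpose K ** R ** K) *v z) \<le> 0" for z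
  proof -
    define y where "y = P *v z"
    define k where "k = K *v z"
    define d where "d = dA *v z - dB *v k"
    have Xy: "X *v y = z" and My: "M *v y = k"
      by (simp_all add: y_def k_def K_def P_def matrix_vector_mul_assoc XP[unfolded P_def])
    have "norm d = norm (hcat dA dB *v vjoin z (- k))"
      by (simp add: d_def hcat_mult_vjoin vec.neg)
    also have "\<dots> \<le> norm (hcat dA dB) * norm (vjoin z (- k))"
      by (rule norm_matrix_vector_mult_le)
    also have "\<dots> \<le> \<rho> * norm (vjoin z (- k))"
      using uncertainty by (rule mult_right_mono) simp
    also have "\<dots> = norm ((Cz \<rho> ** X - Dzu \<rho> ** M) *v y)"
      using \<open>\<rho> \<ge> 0\<close> by (simp add: Cz_Dzu_mult_vector Xy My)
    finally have "d \<bullet> d \<le> norm ((Cz \<rho> ** X - Dzu \<rho> ** M) *v y) ^ 2"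
      by (simp add: power2_norm_eq_inner[symmetric] power_mono)
    then have "((Ah ** X - Bh ** M) *v y + d) \<bullet> (P *v ((Ah ** X - Bh ** M) *v y + d))
        - y \<bullet> (X *v y) + norm ((Cc ** X - Dcu ** M) *v y) ^ 2 \<le> 0"
      by (rule lmi_perturbed_decrease[OF lmi \<open>\<beta> > 0\<close> XP])
    moreover have "(Ah ** X - Bh ** M) *v y + d = Acl *v z"
      by (simp add: Acl_def d_def matrix_vector_mult_add_rdistrib matrix_vector_mult_diff_rdistrib
          matrix_vector_mul_assoc[symmetric] Xy My k_def)
    moreover have "y \<bullet> (X *v y) = z \<bullet> (P *v z)"
      unfolding Xy by (simp add: y_def inner_commute)
    moreover have "norm ((Cc ** X - Dcu ** M) *v y) ^ 2 = z \<bullet> (Q *v z) + k \<bullet> (R *v k)"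
      using norm_factored_cost[OF fact_Q fact_0 fact_R]
      by (simp add: matrix_vector_mult_diff_rdistrib matrix_vector_mul_assoc[symmetric] Xy My)
    ultimately show ?thesis
      by (simp add: quadratic_form_lyapunov_matrix k_def)
  qed
  show ?thesis
    unfolding neg_semidef_def Acl_def[symmetric] using symmetric decrease by blast
qed

lemma pos_def_tendsto_zero:
  fixes Q :: "real^'n^'n" and x :: "nat \<Rightarrow> real^'n"
  assumes "pos_def Q" and bound: "\<And>t. x t \<bullet> (Q *v x t) \<le> c t" and "c \<longlonglongrightarrow> 0"
  shows "x \<longlonglongrightarrow> 0"
proof -
  obtain l where "l > 0" and l: "\<And>v. l * norm v ^ 2 \<le> v \<bullet> (Q *v v)"
    using pos_def_coercive[OF \<open>pos_def Q\<close>] by blast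
  have "norm (x t) \<le> sqrt (c t / l)" for t
  proof (rule real_le_rsqrt)
    show "norm (x t) ^ 2 \<le> c t / l"
      using l[of "x t"] bound[of t] \<open>l > 0\<close> by (simp add: pos_le_divide_eq mult.commute)
  qed
  moreover have "(\<lambda>t. sqrt (c t / l)) \<longlonglongrightarrow> 0"
    using tendsto_real_sqrt[OF tendsto_divide_zero[OF \<open>c \<longlonglongrightarrow> 0\<close>]] by simp
  ultimately show ?thesis
    by (intro Lim_null_comparison[of x]) auto
qed

lemma guaranteed_cost_of_lyapunov:
  fixes A P Q :: "real^'n^'n" and B :: "real^'m^'n" and K :: "real^'n^'m" and R :: "real^'m^'m"
    and x :: "nat \<Rightarrow> real^'n" and u :: "nat \<Rightarrow> real^'m"
  assumes lyapunov: "neg_semidef (transpose (A - B ** K) ** P ** (A - B ** K) - P + Q + transpose K ** R ** K)"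
    and P_nonneg: "\<And>v. 0 \<le> v \<bullet> (P *v v)" and Q_pd: "pos_def Q"
    and R_nonneg: "\<And>v. 0 \<le> v \<bullet> (R *v v)"
    and feedback: "\<And>t. u t = - (K *v x t)" and dynamics: "\<And>t. x (Suc t) = A *v x t + B *v u t"
  shows "(\<exists>J. (\<lambda>N. \<Sum>t\<le>N. x t \<bullet> (Q *v x t) + u t \<bullet> (R *v u t)) \<longlonglongrightarrow> J
      \<and> J \<le> x 0 \<bullet> (P *v x 0)) \<and> x \<longlonglongrightarrow> 0"
proof -
  define c where "c t = x t \<bullet> (Q *v x t) + u t \<bullet> (R *v u t)" for t
  define V where "V v = v \<bullet> (P *v v)" for v
  have step: "V (x (Suc t)) + c t \<le> V (x t)" for t
  proof -
    have "x t \<bullet> ((transpose (A - B ** K) ** P ** (A - B ** K) - P + Q + transpose K ** R ** K) *v x t) \<le> 0"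
      using lyapunov unfolding neg_semidef_def by blast
    moreover have "x (Suc t) = (A - B ** K) *v x t"
      by (simp add: dynamics feedback vec.neg matrix_vector_mult_diff_rdistrib matrix_vector_mul_assoc)
    ultimately show ?thesis
      by (simp add: quadratic_form_lyapunov_matrix V_def c_def feedback vec.neg)
  qed
  have c_nonneg: "0 \<le> c t" for t
    using pos_def_nonneg[OF Q_pd] R_nonneg by (simp add: c_def)
  have telescope: "(\<Sum>t\<le>N. c t) \<le> V (x 0) - V (x (Suc N))" for N
  proof (induction N)
    case 0
    show ?case using step[of 0] by simp
  next
    case (Suc N)
    then show ?case using step[of "Suc N"] by simp
  qed
  have bounded: "(\<Sum>t\<le>N. c t) \<le> V (x 0)" for N
    using telescope[of N] P_nonneg[of "x (Suc N)"] unfolding V_def by linarith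
  then have "summable c"
    using c_nonneg by (rule bounded_imp_summable[rotated])
  then have cost: "(\<lambda>N. \<Sum>t\<le>N. c t) \<longlonglongrightarrow> suminf c"
    by (rule summable_LIMSEQ')
  moreover have "suminf c \<le> V (x 0)"
    using LIMSEQ_le_const2[OF cost] bounded by blast
  moreover have "x \<longlonglongrightarrow> 0"
  proof (rule pos_def_tendsto_zero[OF Q_pd _ summable_LIMSEQ_zero[OF \<open>summable c\<close>]])
    show "x t \<bullet> (Q *v x t) \<le> c t" for t
      using R_nonneg[of "u t"] by (simp add: c_def)
  qed
  ultimately show ?thesis
    unfolding c_def V_def by blast
qed

theorem theorem2:
  fixes Ah :: "real^'n^'n" and Bh :: "real^'m^'n" and \<rho> :: real
    and Q :: "real^'n^'n" and R :: "real^'m^'m"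
    and Cc :: "real^'n^('n+'m)" and Dcu :: "real^'m^('n+'m)"
    and X :: "real^'n^'n" and M :: "real^'n^'m" and \<beta> :: real
  assumes rho_pos: "\<rho> > 0"
    and Q_pd: "pos_def Q" and R_pd: "pos_def R"
    and fact_Q: "transpose Cc ** Cc = Q"
    and fact_0: "transpose Cc ** Dcu = 0"
    and fact_R: "transpose Dcu ** Dcu = R"
    and X_pd: "pos_def X"
    and beta_pos: "\<beta> > 0"
    and lmi: "neg_semidef (lmi_matrix Ah Bh \<rho> Cc Dcu X M \<beta>)"
  defines "K \<equiv> M ** matrix_inv X" and "P \<equiv> matrix_inv X"
  shows "\<forall>dA :: real^'n^'n. \<forall>dB :: real^'m^'n. norm (hcat dA dB) \<le> \<rho> \<longrightarrow>
      neg_semidef (transpose (Ah + dA - (Bh + dB) ** K) ** P ** (Ah + dA - (Bh + dB) ** K)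
                   - P + Q + transpose K ** R ** K)
    \<and> (\<forall>(x0 :: real^'n) (x :: nat \<Rightarrow> real^'n) (u :: nat \<Rightarrow> real^'m).
         x 0 = x0 \<longrightarrow> (\<forall>t. u t = - (K *v x t))
         \<longrightarrow> (\<forall>t. x (Suc t) = (Ah + dA) *v x t + (Bh + dB) *v u t)
         \<longrightarrow> (\<exists>J. (\<lambda>N. \<Sum>t\<le>N. x t \<bullet> (Q *v x t) + u t \<bullet> (R *v u t)) \<longlonglongrightarrow> J
                  \<and> J \<le> x0 \<bullet> (P *v x0))
           \<and> x \<longlonglongrightarrow> 0)"
proof -
  have lyapunov: "neg_semidef (transpose (Ah + dA - (Bh + dB) ** K) ** P ** (Ah + dA - (Bh + dB) ** K)
      - P + Q + transpose K ** R ** K)" if "norm (hcat dA dB) \<le> \<rho>" for dA dB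
    using robust_lyapunov_inequality[OF fact_Q fact_0 fact_R X_pd beta_pos lmi that]
    unfolding K_def P_def .
  have P_nonneg: "0 \<le> v \<bullet> (P *v v)" for v
    unfolding P_def using pos_def_matrix_inv[OF X_pd] by (rule pos_def_nonneg)
  show ?thesis
    using lyapunov guaranteed_cost_of_lyapunov[OF lyapunov P_nonneg Q_pd pos_def_nonneg[OF R_pd]]
    by blast
qed

end
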